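(* Let $(S,\circ)$ be a monoid with identity $e$ and group of units $S^{-1}$. Then: (i) if $x\in S$ is indivisible, then $x$ is a building block of $S$, i.e. $x\in B(S)$; (ii) if $G\subseteq S$ is a generating set of $S$, then $(S^{-1}xS^{-1})\cap G\neq\emptyset$ for every $x\in B(S)$.
   Context: The group of units is $S^{-1}=\{x\in S:\exists y\in S,\ xy=yx=e\}$. An element $x\in S$ is indivisible if for every decomposition $x=yz$ with $y,z\in S$, exactly one of $y,z$ lies in $S^{-1}$. An element $x\in S$ is a building block of $S$ if for every decomposition $x=yz$ with $y,z\in S$ one has $y\in xS^{-1}$ or $z\in S^{-1}x$ (or both); $B(S)$ denotes the set of building blocks. $G\subseteq S$ is a generating set if every element of $S$ is a finite product $g_1\circ\cdots\circ g_m$ ($m\ge1$) of elements of $G$. For subsets, $S^{-1}xS^{-1}=\{uxv:u,v\in S^{-1}\}$. *)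

theory Defs
  imports Main
begin

text \<open>The monoid S is the whole type 'a of class monoid_mult, with identity 1.\<close>

definition units :: "'a::monoid_mult set" where
  "units = {x. \<exists>y. x * y = 1 \<and> y * x = 1}"

definition indivisible :: "'a::monoid_mult \<Rightarrow> bool" where
  "indivisible x \<longleftrightarrow> (\<forall>y z. x = y * z \<longrightarrow> ((y \<in> units) \<noteq> (z \<in> units)))"

definition building_block :: "'a::monoid_mult \<Rightarrow> bool" where
  "building_block x \<longleftrightarrow>
     (\<forall>y z. x = y * z \<longrightarrow> (y \<in> (\<lambda>u. x * u) ` units \<or> z \<in> (\<lambda>u. u * x) ` units))"

definition B :: "'a::monoid_mult set" where
  "B = {x. building_block x}"

definition generating_set :: "'a::monoid_mult set \<Rightarrow> bool" where
  "generating_set G \<longleftrightarrow>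
     (\<forall>s. \<exists>gs. gs \<noteq> [] \<and> set gs \<subseteq> G \<and> s = prod_list gs)"

definition unit_orbit :: "'a::monoid_mult \<Rightarrow> 'a set" where
  "unit_orbit x = {u * x * v | u v. u \<in> units \<and> v \<in> units}"

end

theory Submission
  imports Defs
begin

text \<open>An indivisible element is a building block because in any factorisation the unit factor
  can be moved to the other side. For (ii), being a building block is invariant under
  multiplying by units on either side; so if a building block is a product of generators, peeling
  off the first generator either exhibits it as a unit multiple of the block or leaves a shorter
  product that is still a unit multiple of the block, and induction on the length of the product
  finds a generator in the unit orbit.\<close>

lemma unitsE:
  assumes "u \<in> units"
  obtains u' where "u' \<in> units" "u * u' = 1" "u' * u = 1"
  using assms unfolding units_def by blast

lemma units_mult:
  assumes "u \<in> units" and "v \<in> units"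
  shows "u * v \<in> units"
proof -
  obtain u' where "u * u' = 1" "u' * u = 1" using assms(1) by (rule unitsE)
  moreover obtain v' where "v * v' = 1" "v' * v = 1" using assms(2) by (rule unitsE)
  ultimately have "(u * v) * (v' * u') = 1" "(v' * u') * (u * v) = 1"
    by (simp_all add: mult.assoc flip: mult.assoc[of v v'] mult.assoc[of u' u])
  then show ?thesis unfolding units_def by blast
qed

lemma one_in_units: "1 \<in> units"
  by (simp add: units_def)

lemma self_in_unit_orbit: "x \<in> unit_orbit x"
  unfolding unit_orbit_def using one_in_units by force

lemma unit_orbit_mult_left:
  assumes "u \<in> units" and "y \<in> unit_orbit x"
  shows "u * y \<in> unit_orbit x"
proof -
  from assms(2) obtain a b where "a \<in> units" "b \<in> units" "y = a * x * b"
    unfolding unit_orbit_def by blast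
  moreover from assms(1) \<open>a \<in> units\<close> have "u * a \<in> units" by (rule units_mult)
  ultimately show ?thesis unfolding unit_orbit_def by (force simp: mult.assoc)
qed

lemma unit_orbit_mult_right:
  assumes "v \<in> units" and "y \<in> unit_orbit x"
  shows "y * v \<in> unit_orbit x"
proof -
  from assms(2) obtain a b where "a \<in> units" "b \<in> units" "y = a * x * b"
    unfolding unit_orbit_def by blast
  moreover from \<open>b \<in> units\<close> assms(1) have "b * v \<in> units" by (rule units_mult)
  ultimately show ?thesis unfolding unit_orbit_def by (force simp: mult.assoc)
qed

lemma indivisible_imp_building_block:
  assumes "indivisible x"
  shows "building_block x"
  unfolding building_block_def
proof (intro allI impI)
  fix y z :: 'a
  assume x_eq: "x = y * z"
  with assms have "(y \<in> units) \<noteq> (z \<in> units)"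
    unfolding indivisible_def by blast
  then consider "y \<in> units" | "z \<in> units" by blast
  then show "y \<in> (\<lambda>u. x * u) ` units \<or> z \<in> (\<lambda>u. u * x) ` units"
  proof cases
    case 1
    then obtain y' where "y' \<in> units" "y * y' = 1" "y' * y = 1" by (rule unitsE)
    then have "z = y' * x" by (simp add: x_eq flip: mult.assoc)
    with \<open>y' \<in> units\<close> show ?thesis by blast
  next
    case 2
    then obtain z' where "z' \<in> units" "z * z' = 1" "z' * z = 1" by (rule unitsE)
    then have "y = x * z'" by (simp add: x_eq mult.assoc)
    with \<open>z' \<in> units\<close> show ?thesis by blast
  qed
qed

lemma building_block_unit_orbit:
  assumes "building_block x" and "y \<in> unit_orbit x"
  shows "building_block y"
  unfolding building_block_def
proof (intro allI impI)
  fix a b :: 'a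
  assume y_eq: "y = a * b"
  from \<open>y \<in> unit_orbit x\<close> obtain u v where uv: "u \<in> units" "v \<in> units" "y = u * x * v"
    unfolding unit_orbit_def by blast
  obtain u' where u': "u' \<in> units" "u * u' = 1" "u' * u = 1" using uv(1) by (rule unitsE)
  obtain v' where v': "v' \<in> units" "v * v' = 1" "v' * v = 1" using uv(2) by (rule unitsE)
  have "x = (u' * a) * (b * v')"
    using uv(3) u' v' y_eq by (metis mult.assoc mult_1_left mult_1_right)
  with assms(1) have "u' * a \<in> (\<lambda>w. x * w) ` units \<or> b * v' \<in> (\<lambda>w. w * x) ` units"
    unfolding building_block_def by blast
  then show "a \<in> (\<lambda>w. y * w) ` units \<or> b \<in> (\<lambda>w. w * y) ` units"
  proof
    assume "u' * a \<in> (\<lambda>w. x * w) ` units"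
    then obtain w where "w \<in> units" "u' * a = x * w" by blast
    then have "a = y * (v' * w)"
      using uv(3) u' v' by (metis mult.assoc mult_1_left)
    with \<open>w \<in> units\<close> v'(1) have "a \<in> (\<lambda>w. y * w) ` units" by (blast intro: units_mult)
    then show ?thesis ..
  next
    assume "b * v' \<in> (\<lambda>w. w * x) ` units"
    then obtain w where "w \<in> units" "b * v' = w * x" by blast
    then have "b = (w * u') * y"
      using uv(3) u' v' by (metis mult.assoc mult_1_left mult_1_right)
    with \<open>w \<in> units\<close> u'(1) have "b \<in> (\<lambda>w. w * y) ` units" by (blast intro: units_mult)
    then show ?thesis ..
  qed
qed

lemma building_block_prod_list_factor:
  assumes "building_block x" and "gs \<noteq> []" and "prod_list gs \<in> unit_orbit x"
  shows "\<exists>g \<in> set gs. g \<in> unit_orbit x"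
  using assms(2,3)
proof (induction gs)
  case Nil
  then show ?case by simp
next
  case (Cons g rest)
  show ?case
  proof (cases "rest = []")
    case True
    with Cons.prems show ?thesis by simp
  next
    case False
    have "building_block (g * prod_list rest)"
      using building_block_unit_orbit[OF assms(1)] Cons.prems(2) by simp
    then have "g \<in> (\<lambda>w. g * prod_list rest * w) ` units
        \<or> prod_list rest \<in> (\<lambda>w. w * (g * prod_list rest)) ` units"
      unfolding building_block_def by blast
    then show ?thesis
    proof
      assume "g \<in> (\<lambda>w. g * prod_list rest * w) ` units"
      then obtain w where "w \<in> units" "g = g * prod_list rest * w" by blast
      with Cons.prems(2) have "g \<in> unit_orbit x" by (metis unit_orbit_mult_right prod_list.Cons)
      then show ?thesis by simp
    next
      assume "prod_list rest \<in> (\<lambda>w. w * (g * prod_list rest)) ` units"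
      then obtain w where "w \<in> units" "prod_list rest = w * (g * prod_list rest)" by blast
      with Cons.prems(2) have "prod_list rest \<in> unit_orbit x"
        by (metis unit_orbit_mult_left prod_list.Cons)
      with Cons.IH False show ?thesis by simp
    qed
  qed
qed

theorem lemma1:
  shows "(\<forall>x::'a::monoid_mult. indivisible x \<longrightarrow> x \<in> B)
       \<and> (\<forall>G::'a set. generating_set G \<longrightarrow> (\<forall>x \<in> B. unit_orbit x \<inter> G \<noteq> {}))"
proof (intro conjI allI impI ballI)
  fix x :: 'a
  assume "indivisible x"
  then show "x \<in> B" by (simp add: B_def indivisible_imp_building_block)
next
  fix G :: "'a set" and x :: 'a
  assume "generating_set G" and "x \<in> B"
  then obtain gs where gs: "gs \<noteq> []" "set gs \<subseteq> G" "x = prod_list gs"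
    unfolding generating_set_def by blast
  moreover from \<open>x \<in> B\<close> have "building_block x" by (simp add: B_def)
  ultimately obtain g where "g \<in> set gs" "g \<in> unit_orbit x"
    using building_block_prod_list_factor self_in_unit_orbit by metis
  with gs(2) show "unit_orbit x \<inter> G \<noteq> {}" by blast
qed

end
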